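(* Let $\mathcal T\in\Sigma^n$ be a text. Then $|\mathtt{st\text{-}pos}^-|$ is at most the number of escape symbols $\bot$ output by the following simple version of PPM$^*$ on $\mathcal T$: encode $\mathcal T[1]$ as $\bot\mathcal T[1]$; for $j=2,\dots,n$, let $i'$ be the minimum $i'\le j$ such that $\mathcal T[i',j-1]$ occurs in $\mathcal T[1,j-2]$; if $\mathcal T[i',j]$ occurs in $\mathcal T[1,j-1]$, encode $\mathcal T[j]$ according to the distribution of characters immediately following occurrences of $\mathcal T[i',j-1]$, otherwise encode $\mathcal T[j]$ as $\bot\mathcal T[j]$.
   Context: A text is a string $\mathcal T\in\Sigma^n$ over an integer alphabet whose last symbol $\mathcal T[n]=\$$ occurs only there and is smallest. For $i\ne j$, $\mathrm{rlce}(i,j)$ is the length of the longest common prefix of $\mathcal T[i,n]$ and $\mathcal T[j,n]$. $\mathrm{LPF}[i]=0$ if $i=1$, else $\mathrm{LPF}[i]=\max_{j<i}\mathrm{rlce}(j,i)$. $\mathtt{st\text{-}pos}^-$ is the set $\{i+\mathrm{LPF}[i]: i\in[n]\}$ (without duplicates), and $|\mathtt{st\text{-}pos}^-|$ its cardinality. The empty string $\mathcal T[j,j-1]$ is considered to occur in any string. *)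

theory Defs
  imports Main "HOL-Library.Sublist"
begin

text \<open>Texts are lists; positions are 1-based as in the paper: T[i] = T ! (i-1).\<close>

definition is_text :: "int list \<Rightarrow> bool" where
  "is_text T \<longleftrightarrow> T \<noteq> [] \<and>
     (\<forall>k < length T - 1. T ! k \<noteq> last T \<and> last T < T ! k)"

text \<open>Substring T[i,j] (1-based, inclusive); the empty string when j = i - 1.\<close>
definition substr :: "'a list \<Rightarrow> nat \<Rightarrow> nat \<Rightarrow> 'a list" where
  "substr T i j = take (Suc j - i) (drop (i - 1) T)"

fun lcp_len :: "'a list \<Rightarrow> 'a list \<Rightarrow> nat" where
  "lcp_len (x # xs) (y # ys) = (if x = y then Suc (lcp_len xs ys) else 0)"
| "lcp_len _ _ = 0"

definition rlce :: "'a list \<Rightarrow> nat \<Rightarrow> nat \<Rightarrow> nat" where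
  "rlce T i j = lcp_len (drop (i - 1) T) (drop (j - 1) T)"

definition LPF :: "'a list \<Rightarrow> nat \<Rightarrow> nat" where
  "LPF T i = (if i = 1 then 0 else Max {rlce T j i | j. 1 \<le> j \<and> j < i})"

definition st_pos_minus :: "'a list \<Rightarrow> nat set" where
  "st_pos_minus T = {i + LPF T i | i. 1 \<le> i \<and> i \<le> length T}"

text \<open>T[1] is always encoded with an escape.\<close>
definition ppm_ctx_start :: "'a list \<Rightarrow> nat \<Rightarrow> nat" where
  "ppm_ctx_start T j = (LEAST i'. 1 \<le> i' \<and> i' \<le> j \<and>
      sublist (substr T i' (j - 1)) (substr T 1 (j - 2)))"

definition ppm_escape :: "'a list \<Rightarrow> nat \<Rightarrow> bool" where
  "ppm_escape T j \<longleftrightarrow>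
     \<not> sublist (substr T (ppm_ctx_start T j) j) (substr T 1 (j - 1))"

definition ppm_escapes :: "'a list \<Rightarrow> nat" where
  "ppm_escapes T = 1 + card {j. 2 \<le> j \<and> j \<le> length T \<and> ppm_escape T j}"

end

theory Submission
  imports Defs
begin

text \<open>Let \<open>i \<ge> 2\<close>, \<open>\<ell> = LPF[i]\<close> and \<open>j = i + \<ell>\<close>. The sentinel \<open>$\<close> cannot lie in a
  repeated factor, so \<open>j \<le> n\<close>. Since \<open>T[i,j-1]\<close> occurs in \<open>T[1,j-2]\<close>, the context chosen by
  PPM* at step \<open>j\<close> starts at some \<open>i' \<le> i\<close>. If \<open>T[i',j]\<close> occurred in \<open>T[1,j-1]\<close>, so would
  its suffix \<open>T[i,j]\<close>, i.e. at a position before \<open>i\<close>, contradicting the maximality of \<open>\<ell>\<close>.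
  Hence every element of \<open>st-pos\<^sup>-\<close> other than \<open>1 = 1 + LPF[1]\<close> is an escape position.\<close>

lemma lcp_len_take_eq: "take (lcp_len xs ys) xs = take (lcp_len xs ys) ys"
  by (induction xs ys rule: lcp_len.induct) auto

lemma le_lcp_len_if_take_eq:
  "take m xs = take m ys \<Longrightarrow> m \<le> length ys \<Longrightarrow> m \<le> lcp_len xs ys"
proof (induction xs arbitrary: ys m)
  case Nil
  then show ?case by auto
next
  case (Cons x xs)
  then show ?case by (cases ys; cases m) auto
qed

lemma sublist_take_iff:
  "sublist xs (take m ys) \<longleftrightarrow> (\<exists>p. p + length xs \<le> m \<and> take (length xs) (drop p ys) = xs)"
proof
  assume "sublist xs (take m ys)"
  then obtain ps ss where split: "take m ys = ps @ xs @ ss"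
    unfolding sublist_def by blast
  then have "take (length xs) (drop (length ps) (take m ys)) = xs"
    by simp
  moreover have "length ps + length xs \<le> m"
    using arg_cong[OF split, of length] by simp
  ultimately show "\<exists>p. p + length xs \<le> m \<and> take (length xs) (drop p ys) = xs"
    by (auto simp: take_drop min_def)
next
  assume "\<exists>p. p + length xs \<le> m \<and> take (length xs) (drop p ys) = xs"
  then obtain p where "p + length xs \<le> m" "take (length xs) (drop p ys) = xs"
    by blast
  then have "xs = take (length xs) (drop p (take m ys))"
    by (simp add: take_drop min_def)
  then show "sublist xs (take m ys)"
    by (metis sublist_order.order.trans sublist_take sublist_drop)
qed

lemma substr_1: "substr T 1 j = take j T"
  by (simp add: substr_def)

lemma suffix_substr:
  assumes "1 \<le> i'" "i' \<le> i"
  shows "suffix (substr T i j) (substr T i' j)"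
proof -
  have "substr T i j = drop (i - i') (substr T i' j)"
    using assms by (simp add: substr_def drop_take diff_diff_eq)
  then show ?thesis by (simp add: suffix_drop)
qed

lemma LPF_eq_Max:
  assumes "2 \<le> i"
  shows "LPF T i = Max ((\<lambda>j. rlce T j i) ` {1..<i})"
proof -
  have "{rlce T j i | j. 1 \<le> j \<and> j < i} = (\<lambda>j. rlce T j i) ` {1..<i}"
    by auto
  then show ?thesis using assms by (simp add: LPF_def)
qed

lemma rlce_le_LPF: "1 \<le> j \<Longrightarrow> j < i \<Longrightarrow> rlce T j i \<le> LPF T i"
  by (simp add: LPF_eq_Max)

lemma LPF_attained: "2 \<le> i \<Longrightarrow> \<exists>j. 1 \<le> j \<and> j < i \<and> rlce T j i = LPF T i"
  using Max_in[of "(\<lambda>j. rlce T j i) ` {1..<i}"] by (fastforce simp: LPF_eq_Max)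

lemma rlce_bounded_by_sentinel:
  assumes "is_text T" "1 \<le> j" "j < i" "i \<le> length T"
  shows "i + rlce T j i \<le> length T"
proof (rule ccontr)
  let ?n = "length T" and ?L = "rlce T j i"
  assume "\<not> ?thesis"
  then have "?n - i < ?L"
    using assms(4) by linarith
  moreover have "take ?L (drop (j - 1) T) ! (?n - i) = take ?L (drop (i - 1) T) ! (?n - i)"
    by (metis rlce_def lcp_len_take_eq)
  ultimately have "T ! (j - 1 + (?n - i)) = T ! (?n - 1)"
    using assms(2-4) by simp
  also have "\<dots> = last T"
    using assms(1) by (simp add: is_text_def last_conv_nth)
  finally show False
    using assms by (auto simp: is_text_def)
qed

lemma LPF_le_suffix_length:
  assumes "is_text T" "2 \<le> i" "i \<le> length T"
  shows "i + LPF T i \<le> length T"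
  using LPF_attained[OF assms(2)] rlce_bounded_by_sentinel[OF assms(1)] assms(3) by metis

lemma LPF_factor_occurs_earlier:
  assumes "2 \<le> i"
  shows "sublist (substr T i (i + LPF T i - 1)) (substr T 1 (i + LPF T i - 2))"
proof -
  let ?L = "LPF T i"
  obtain j where j: "1 \<le> j" "j < i" "rlce T j i = ?L"
    using LPF_attained[OF assms] by blast
  let ?w = "take ?L (drop (j - 1) T)"
  have "substr T i (i + ?L - 1) = ?w"
    using lcp_len_take_eq[of "drop (j - 1) T" "drop (i - 1) T"] j assms
    by (simp add: substr_def rlce_def)
  moreover have "j - 1 + length ?w \<le> i + ?L - 2" "take (length ?w) (drop (j - 1) T) = ?w"
    using j by (auto simp: min_def)
  ultimately show ?thesis
    unfolding substr_1 sublist_take_iff by metis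
qed

lemma LPF_extension_not_earlier:
  assumes "2 \<le> i" "i + LPF T i \<le> length T"
  shows "\<not> sublist (substr T i (i + LPF T i)) (substr T 1 (i + LPF T i - 1))"
proof
  let ?L = "LPF T i"
  let ?w = "substr T i (i + ?L)"
  assume "sublist ?w (substr T 1 (i + ?L - 1))"
  moreover have len: "length ?w = Suc ?L"
    using assms by (simp add: substr_def)
  ultimately obtain p where p: "p + Suc ?L \<le> i + ?L - 1" "take (Suc ?L) (drop p T) = ?w"
    unfolding substr_1 sublist_take_iff by auto
  have "?w = take (Suc ?L) (drop (i - 1) T)"
    using assms by (simp add: substr_def)
  then have "Suc ?L \<le> rlce T (p + 1) i"
    unfolding rlce_def using p len by (intro le_lcp_len_if_take_eq) auto
  moreover have "rlce T (p + 1) i \<le> ?L"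
    using p(1) by (intro rlce_le_LPF) auto
  ultimately show False
    by simp
qed

lemma ppm_ctx_start_le:
  assumes "1 \<le> i" "i \<le> j" "sublist (substr T i (j - 1)) (substr T 1 (j - 2))"
  shows "1 \<le> ppm_ctx_start T j" "ppm_ctx_start T j \<le> i"
proof -
  have "1 \<le> ppm_ctx_start T j \<and> ppm_ctx_start T j \<le> j \<and>
      sublist (substr T (ppm_ctx_start T j) (j - 1)) (substr T 1 (j - 2))"
    unfolding ppm_ctx_start_def by (rule LeastI[of _ i]) (use assms in auto)
  then show "1 \<le> ppm_ctx_start T j"
    by simp
  show "ppm_ctx_start T j \<le> i"
    unfolding ppm_ctx_start_def by (rule Least_le) (use assms in auto)
qed

lemma ppm_escape_if_extension_new:
  assumes "1 \<le> i" "i \<le> j"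
    and "sublist (substr T i (j - 1)) (substr T 1 (j - 2))"
    and "\<not> sublist (substr T i j) (substr T 1 (j - 1))"
  shows "ppm_escape T j"
  using ppm_ctx_start_le[OF assms(1-3)] suffix_substr assms(4) unfolding ppm_escape_def
  by (meson suffix_imp_sublist sublist_order.order.trans)

lemma ppm_escape_at_LPF:
  assumes "2 \<le> i" "i + LPF T i \<le> length T"
  shows "ppm_escape T (i + LPF T i)"
  using assms LPF_factor_occurs_earlier LPF_extension_not_earlier
  by (intro ppm_escape_if_extension_new[of i]) auto

lemma st_pos_minus_subset_escapes:
  assumes "is_text T"
  shows "st_pos_minus T \<subseteq> insert 1 {j. 2 \<le> j \<and> j \<le> length T \<and> ppm_escape T j}"
proof
  fix x
  assume "x \<in> st_pos_minus T"
  then obtain i where i: "x = i + LPF T i" "1 \<le> i" "i \<le> length T"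
    unfolding st_pos_minus_def by auto
  show "x \<in> insert 1 {j. 2 \<le> j \<and> j \<le> length T \<and> ppm_escape T j}"
  proof (cases "i = 1")
    case True
    then show ?thesis
      using i by (simp add: LPF_def)
  next
    case False
    then have "2 \<le> i"
      using i by simp
    then show ?thesis
      using i LPF_le_suffix_length[OF assms] ppm_escape_at_LPF by auto
  qed
qed

theorem lemma48:
  fixes T :: "int list"
  assumes "is_text T"
  shows "card (st_pos_minus T) \<le> ppm_escapes T"
proof -
  let ?E = "{j. 2 \<le> j \<and> j \<le> length T \<and> ppm_escape T j}"
  have "finite ?E"
    by simp
  then have "card (st_pos_minus T) \<le> card (insert 1 ?E)"
    using st_pos_minus_subset_escapes[OF assms] by (intro card_mono) auto
  also have "\<dots> \<le> 1 + card ?E"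
    using \<open>finite ?E\<close> by (simp add: card_insert_if)
  finally show ?thesis
    unfolding ppm_escapes_def .
qed

end
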